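(* Let $G$ be a finite graph with a self-loop on every vertex, and let $v$ be a vertex of $G$ of degree $d=d(v)$, where the self-loop at $v$ is counted once (so $d-1$ is the number of neighbours of $v$ other than $v$ itself). Then $$R(G,v)=\frac{C(G)}{C(G-\{v\})} \leq 1 + \frac{d^2-d}{2}.$$
   Context: For a finite graph $H$ (undirected, with a self-loop on every vertex and no multiple edges), $C(H)$ denotes the number of vertex-disjoint directed cycle covers of $H$, where cycles of every positive length are allowed: a cycle of length 1 is a single vertex using its loop, and a cycle of length 2 consists of two adjacent vertices using the edge between them in both directions. Equivalently, $C(H)$ is the number of permutations $\sigma$ of the vertex set of $H$ such that for every vertex $u$, either $\sigma(u)=u$ or $\sigma(u)$ is adjacent to $u$. The empty graph has $C=1$. $G-\{v\}$ denotes the graph obtained from $G$ by deleting $v$ and its incident edges, and $R(G,v)=C(G)/C(G-\{v\})$. *)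

theory Defs
  imports Complex_Main "HOL-Combinatorics.Permutations"
begin

text \<open>Every vertex carries a self-loop implicitly (loops are not recorded in E;
  any value of E u u is ignored).\<close>

definition cycle_covers :: "'a set \<Rightarrow> ('a \<Rightarrow> 'a \<Rightarrow> bool) \<Rightarrow> ('a \<Rightarrow> 'a) set" where
  "cycle_covers V E = {\<sigma>. \<sigma> permutes V \<and> (\<forall>u\<in>V. \<sigma> u = u \<or> E u (\<sigma> u))}"

definition C :: "'a set \<Rightarrow> ('a \<Rightarrow> 'a \<Rightarrow> bool) \<Rightarrow> nat" where
  "C V E = card (cycle_covers V E)"

text \<open>Deleting v: restrict the vertex set (edges incident to v disappear with it).\<close>
definition R :: "'a set \<Rightarrow> ('a \<Rightarrow> 'a \<Rightarrow> bool) \<Rightarrow> 'a \<Rightarrow> real" where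
  "R V E v = real (C V E) / real (C (V - {v}) E)"

text \<open>Degree with the self-loop counted once.\<close>
definition deg :: "'a set \<Rightarrow> ('a \<Rightarrow> 'a \<Rightarrow> bool) \<Rightarrow> 'a \<Rightarrow> nat" where
  "deg V E v = card {w\<in>V. w \<noteq> v \<and> E v w} + 1"

end

(*
  A cycle cover of G either fixes v, and is then a cycle cover of G - v, or it passes through v
  as a -> v -> b for neighbours a, b of v.  Composing it with the transposition (v a) removes v
  and reroutes a directly to b: this gives a cycle cover of G - v that is allowed to use an
  extra arc a -> b.  For a = b these are ordinary cycle covers of G - v.  For a /= b let N(a,b)
  be the set of them.  Exchanging two permutations P in N(a,b) and Q in N(b,a) along the
  alternating orbit through b (follow P forwards and Q backwards) and untwisting with (a b)
  yields an injection N(a,b) x N(b,a) -> {covers fixing a} x {covers moving a}.  Inversion gives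
  |N(a,b)| = |N(b,a)|, so by AM-GM 2 |N(a,b)| <= C(G - v).  Summing over the (d-1)^2 pairs
  (a,b) gives C(G) <= C(G - v) (1 + (d-1) + (d-1)(d-2)/2) = C(G - v) (1 + (d^2 - d)/2).
*)

theory Submission
  imports Defs "HOL-Combinatorics.Orbits"
begin

abbreviation alt_orbit :: "('a \<Rightarrow> 'a) \<Rightarrow> ('a \<Rightarrow> 'a) \<Rightarrow> 'a \<Rightarrow> 'a set" where
  "alt_orbit P Q x \<equiv> orbit (inv Q \<circ> P) x"

text \<open>The alternating orbit through x is traced by following P forwards and Q backwards; P and Q
  map it onto the same set, so exchanging P and Q on it gives two permutations again.\<close>

definition alt_swap :: "'a \<Rightarrow> ('a \<Rightarrow> 'a) \<times> ('a \<Rightarrow> 'a) \<Rightarrow> ('a \<Rightarrow> 'a) \<times> ('a \<Rightarrow> 'a)" where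
  "alt_swap x = (\<lambda>(P, Q). (override_on P Q (alt_orbit P Q x), override_on Q P (alt_orbit P Q x)))"

lemma alt_orbit_basics:
  assumes P: "P permutes V" and Q: "Q permutes V" and "finite V" "x \<in> V"
  shows "alt_orbit P Q x \<subseteq> V" "x \<in> alt_orbit P Q x"
    and "P ` alt_orbit P Q x = Q ` alt_orbit P Q x"
proof -
  let ?g = "inv Q \<circ> P" and ?S = "alt_orbit P Q x"
  have g: "?g permutes V" using permutes_compose[OF P permutes_inv[OF Q]] .
  show SV: "?S \<subseteq> V" using permutes_orbit_subset[OF g \<open>x \<in> V\<close>] .
  show "x \<in> ?S" by (rule permutation_self_in_orbit[OF permutes_imp_permutation[OF \<open>finite V\<close> g]])
  have "?g ` ?S \<subseteq> ?S" by (blast intro: orbit.step)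
  then have "?g ` ?S = ?S"
    using finite_subset[OF SV \<open>finite V\<close>] permutes_inj[OF g]
    by (intro endo_inj_surj) (auto intro: inj_on_subset)
  then have "Q ` ?g ` ?S = Q ` ?S" by simp
  then show "P ` ?S = Q ` ?S" by (simp add: image_comp comp_def permutes_inverses(1)[OF Q])
qed

lemma override_on_permutes:
  assumes P: "P permutes V" and Q: "Q permutes V" and "finite V" and "P ` S = Q ` S"
  shows "override_on P Q S permutes V"
proof (rule inj_imp_permutes[OF _ \<open>finite V\<close>])
  have "inj P" "inj Q" using P Q by (simp_all add: permutes_inj)
  have mem: "P y \<in> Q ` S \<longleftrightarrow> y \<in> S" "Q y \<in> P ` S \<longleftrightarrow> y \<in> S" for y
    using \<open>P ` S = Q ` S\<close> \<open>inj P\<close> \<open>inj Q\<close> by (metis inj_image_mem_iff)+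
  show "inj_on (override_on P Q S) V"
  proof (rule inj_onI)
    fix x y assume eq: "override_on P Q S x = override_on P Q S y"
    show "x = y"
    proof (cases "x \<in> S"; cases "y \<in> S")
      assume "x \<in> S" "y \<notin> S"
      then show ?thesis using eq mem(1)[of y] by (metis imageI override_on_apply_in override_on_apply_notin)
    next
      assume "x \<notin> S" "y \<in> S"
      then show ?thesis using eq mem(1)[of x] by (metis imageI override_on_apply_in override_on_apply_notin)
    qed (use eq \<open>inj P\<close> \<open>inj Q\<close> in \<open>auto simp: inj_eq\<close>)
  qed
qed (use P Q in \<open>auto simp: override_on_def permutes_in_image permutes_not_in\<close>)

lemma alt_swap_permutes:
  assumes "P permutes V" "Q permutes V" "finite V" "x \<in> V"
  shows "fst (alt_swap x (P, Q)) permutes V" "snd (alt_swap x (P, Q)) permutes V"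
  using override_on_permutes[OF assms(1-3) alt_orbit_basics(3)[OF assms]]
    override_on_permutes[OF assms(2,1,3) alt_orbit_basics(3)[OF assms, symmetric]]
  by (simp_all add: alt_swap_def)

lemma alt_swap_involution:
  assumes P: "P permutes V" and Q: "Q permutes V" and "finite V" "x \<in> V"
  shows "alt_swap x (alt_swap x (P, Q)) = (P, Q)"
proof -
  define S where "S = alt_orbit P Q x"
  define P' where "P' = override_on P Q S"
  define Q' where "Q' = override_on Q P S"
  have g: "inv Q \<circ> P permutes V" using permutes_compose[OF P permutes_inv[OF Q]] .
  have inv_g: "inv (inv Q \<circ> P) = inv P \<circ> Q"
    using P Q by (simp add: o_inv_distrib permutes_bij bij_imp_bij_inv inv_inv_eq)
  have S_inv: "S = orbit (inv P \<circ> Q) x"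
    unfolding S_def inv_g[symmetric]
    using orbit_inv_eq permutes_imp_permutation[OF \<open>finite V\<close> g] by metis
  have closed: "(inv P \<circ> Q) y \<in> S" if "y \<in> S" for y
    using that unfolding S_inv by (rule orbit.step)
  have agree: "(inv Q' \<circ> P') y = (inv P \<circ> Q) y" if "y \<in> S" for y
  proof -
    have "Q' ((inv P \<circ> Q) y) = Q y"
      using closed[OF that] by (simp add: Q'_def permutes_inverses(1)[OF P])
    moreover have "Q' permutes V"
      unfolding Q'_def S_def using alt_swap_permutes(2)[OF assms] by (simp add: alt_swap_def)
    ultimately show ?thesis
      using that by (simp add: P'_def permutes_inv_eq)
  qed
  have "orbit (inv P \<circ> Q) x = alt_orbit P' Q' x"
    by (rule orbit_cong0[where A = S]) (use alt_orbit_basics(2)[OF assms] closed agree[symmetric] in \<open>auto simp: S_def\<close>)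
  then have "alt_swap x (P', Q') = (override_on P' Q' S, override_on Q' P' S)"
    by (simp add: alt_swap_def S_inv)
  moreover have "alt_swap x (P, Q) = (P', Q')"
    by (simp add: alt_swap_def P'_def Q'_def S_def)
  ultimately show ?thesis
    by (simp add: P'_def Q'_def override_on_def fun_eq_iff)
qed

lemma inj_on_alt_swap:
  assumes "finite V" "x \<in> V"
  shows "inj_on (alt_swap x) ({p. p permutes V} \<times> {p. p permutes V})"
  by (rule inj_on_inverseI[where g = "alt_swap x"]) (use alt_swap_involution assms in auto)

lemma orbit_transpose_split:
  assumes "u \<noteq> w" and "u \<in> orbit f w"
  shows "u \<notin> orbit (transpose u w \<circ> f) w"
proof -
  let ?g = "transpose u w \<circ> f"
  define j where "j = funpow_dist1 f w u"
  have fj: "(f ^^ j) w = u" unfolding j_def using funpow_dist1_prop[OF assms(2)] .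
  have avoid: "(f ^^ i) w \<notin> {u, w}" if "0 < i" "i < j" for i
  proof -
    have "(f ^^ i) w \<noteq> u"
      using funpow_dist1_least[where n=i and f=f and x=w and y=u] that unfolding j_def by simp
    moreover have "(f ^^ i) w \<noteq> w"
      using funpow_dist1_le_self[where f=f and m=i and x=w and y=u] assms(2) that
      unfolding j_def by linarith
    ultimately show ?thesis by simp
  qed
  have agree: "(?g ^^ i) w = (f ^^ i) w" if "i < j" for i
    using that
  proof (induction i)
    case (Suc i)
    then show ?case using avoid[of "Suc i"] by simp
  qed simp
  obtain i where j: "j = Suc i" unfolding j_def by blast
  have "(?g ^^ j) w = w"
    using agree[of i] fj by (simp add: j)
  then have "orbit ?g w = {(?g ^^ m) w | m. m < j}"
    using j by (intro orbit_altdef_bounded) simp_all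
  then have "u \<in> orbit ?g w \<Longrightarrow> \<exists>m<j. u = (f ^^ m) w"
    using agree by auto
  then show ?thesis
    using avoid assms(1) by (metis funpow_0 gr0I insertCI)
qed

text \<open>When u lies off the orbit, the first exchanged permutation sends u to w and w to u, using the
  extra arcs; composing with (u w) removes this 2-cycle.\<close>

definition swap_untwist :: "'a \<Rightarrow> 'a \<Rightarrow> ('a \<Rightarrow> 'a) \<times> ('a \<Rightarrow> 'a) \<Rightarrow> ('a \<Rightarrow> 'a) \<times> ('a \<Rightarrow> 'a)" where
  "swap_untwist u w PQ = (fst (alt_swap w PQ) \<circ> transpose u w, snd (alt_swap w PQ))"

lemma inj_on_swap_untwist:
  assumes "finite V" "w \<in> V"
  shows "inj_on (swap_untwist u w) ({p. p permutes V} \<times> {p. p permutes V})"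
proof (rule inj_onI)
  fix PQ PQ' assume "PQ \<in> {p. p permutes V} \<times> {p. p permutes V}" "PQ' \<in> {p. p permutes V} \<times> {p. p permutes V}"
    and eq: "swap_untwist u w PQ = swap_untwist u w PQ'"
  moreover from eq have "alt_swap w PQ = alt_swap w PQ'"
    unfolding swap_untwist_def
    by (metis (no_types) prod_eq_iff fst_conv snd_conv transpose_comp_involutory comp_assoc comp_id)
  ultimately show "PQ = PQ'" using inj_on_alt_swap[OF assms] by (auto dest: inj_onD)
qed

lemma swap_untwist_permutes:
  assumes "P permutes V" "Q permutes V" "finite V" "u \<in> V" "w \<in> V"
  shows "fst (swap_untwist u w (P, Q)) permutes V" "snd (swap_untwist u w (P, Q)) permutes V"
  using permutes_compose[OF permutes_swap_id[OF assms(4,5)] alt_swap_permutes(1)[OF assms(1-3,5)]]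
    alt_swap_permutes(2)[OF assms(1-3,5)]
  by (simp_all add: swap_untwist_def)

lemma swap_untwist_values:
  assumes "P permutes W" "Q permutes W" "finite W" "w \<in> W"
    and "P u = w" and "u \<notin> alt_orbit P Q w"
  shows "fst (swap_untwist u w (P, Q)) u = Q w"
    and "fst (swap_untwist u w (P, Q)) w = w"
    and "snd (swap_untwist u w (P, Q)) u = Q u"
    and "snd (swap_untwist u w (P, Q)) w = P w"
    and "x \<notin> {u, w} \<Longrightarrow> fst (swap_untwist u w (P, Q)) x \<in> {P x, Q x}"
    and "snd (swap_untwist u w (P, Q)) x \<in> {P x, Q x}"
  using alt_orbit_basics(2)[OF assms(1-4)] assms(5,6)
  by (auto simp: swap_untwist_def alt_swap_def override_on_def)

text \<open>The cycle covers of the graph with an extra arc from u to w that use this arc.\<close>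

definition forced_covers :: "'a set \<Rightarrow> ('a \<Rightarrow> 'a \<Rightarrow> bool) \<Rightarrow> 'a \<Rightarrow> 'a \<Rightarrow> ('a \<Rightarrow> 'a) set" where
  "forced_covers W E u w = {\<tau>. \<tau> permutes W \<and> \<tau> u = w \<and> (\<forall>x\<in>W - {u}. \<tau> x = x \<or> E x (\<tau> x))}"

lemma finite_cycle_covers: "finite W \<Longrightarrow> finite (cycle_covers W E)"
  unfolding cycle_covers_def by (rule finite_subset[OF _ finite_permutations]) auto

lemma finite_forced_covers: "finite W \<Longrightarrow> finite (forced_covers W E u w)"
  unfolding forced_covers_def by (rule finite_subset[OF _ finite_permutations]) auto

lemma permutes_moves_image:
  assumes "p permutes W" "p u = w" "u \<noteq> w"
  shows "p w \<noteq> w"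
  using assms permutes_inj[OF assms(1)] by (metis injD)

lemma swap_untwist_unlinked:
  assumes fin: "finite W" and u: "u \<in> W" and w: "w \<in> W" and uw: "u \<noteq> w"
    and P: "P \<in> forced_covers W E u w" and Q: "Q \<in> forced_covers W E w u"
    and unlinked: "u \<notin> alt_orbit P Q w"
  shows "swap_untwist u w (P, Q)
    \<in> {\<sigma> \<in> cycle_covers W E. \<sigma> u = u \<and> \<sigma> w = w} \<times> {\<sigma> \<in> cycle_covers W E. \<sigma> u \<noteq> u}"
proof -
  have Pp: "P permutes W" and Pu: "P u = w" and P_ok: "\<And>x. x \<in> W - {u} \<Longrightarrow> P x = x \<or> E x (P x)"
    using P by (auto simp: forced_covers_def)
  have Qp: "Q permutes W" and Qw: "Q w = u" and Q_ok: "\<And>x. x \<in> W - {w} \<Longrightarrow> Q x = x \<or> E x (Q x)"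
    using Q by (auto simp: forced_covers_def)
  define P' where "P' = fst (swap_untwist u w (P, Q))"
  define Q' where "Q' = snd (swap_untwist u w (P, Q))"
  note val = swap_untwist_values[OF Pp Qp fin w Pu unlinked, folded P'_def Q'_def]
  have "P' u = u" "P' w = w" using val(1,2) Qw by simp_all
  moreover have "P' x = x \<or> E x (P' x)" if "x \<in> W" for x
    using val(5)[of x] P_ok[of x] Q_ok[of x] \<open>P' u = u\<close> \<open>P' w = w\<close> that
    by (cases "x = u \<or> x = w") auto
  moreover have "Q' x = x \<or> E x (Q' x)" if "x \<in> W" for x
    using val(3,4) val(6)[of x] P_ok[of x] Q_ok[of x] that uw by (cases "x = u \<or> x = w") auto
  moreover have "Q' u \<noteq> u"
    using val(3) permutes_moves_image[OF Qp Qw uw[symmetric]] by simp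
  ultimately show ?thesis
    using swap_untwist_permutes[OF Pp Qp fin u w]
    by (simp add: P'_def Q'_def cycle_covers_def prod_eq_iff mem_Times_iff)
qed

lemma swap_untwist_linked:
  assumes fin: "finite W" and u: "u \<in> W" and w: "w \<in> W" and uw: "u \<noteq> w"
    and P: "P \<in> forced_covers W E u w" and Q: "Q \<in> forced_covers W E w u"
    and linked: "u \<in> alt_orbit P Q w"
  shows "swap_untwist u w (P, Q \<circ> transpose u w)
    \<in> {\<sigma> \<in> cycle_covers W E. \<sigma> u \<noteq> u} \<times> {\<sigma> \<in> cycle_covers W E. \<sigma> u = u \<and> \<sigma> w \<noteq> w}"
proof -
  let ?t = "transpose u w"
  have Pp: "P permutes W" and Pu: "P u = w" and P_ok: "\<And>x. x \<in> W - {u} \<Longrightarrow> P x = x \<or> E x (P x)"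
    using P by (auto simp: forced_covers_def)
  have Qp: "Q permutes W" and Qw: "Q w = u" and Q_ok: "\<And>x. x \<in> W - {w} \<Longrightarrow> Q x = x \<or> E x (Q x)"
    using Q by (auto simp: forced_covers_def)
  have Qtp: "Q \<circ> ?t permutes W" using permutes_compose[OF permutes_swap_id[OF u w] Qp] .
  have "inv (Q \<circ> ?t) \<circ> P = ?t \<circ> (inv Q \<circ> P)"
    using permutes_bij[OF Qp] by (simp add: o_inv_distrib o_assoc)
  then have unlinked: "u \<notin> alt_orbit P (Q \<circ> ?t) w"
    using orbit_transpose_split[OF uw linked] by simp
  define P' where "P' = fst (swap_untwist u w (P, Q \<circ> ?t))"
  define Q' where "Q' = snd (swap_untwist u w (P, Q \<circ> ?t))"
  note val = swap_untwist_values[OF Pp Qtp fin w Pu unlinked, folded P'_def Q'_def]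
  have "Q' u = u" using val(3) Qw by simp
  moreover have "Q' w \<noteq> w" using val(4) permutes_moves_image[OF Pp Pu uw] by simp
  moreover have "Q' x = x \<or> E x (Q' x)" if "x \<in> W" for x
    using val(4) val(6)[of x] P_ok[of x] Q_ok[of x] \<open>Q' u = u\<close> that uw by (cases "x = u \<or> x = w") auto
  moreover have "P' x = x \<or> E x (P' x)" if "x \<in> W" for x
    using val(1,2) val(5)[of x] P_ok[of x] Q_ok[of x] that uw by (cases "x = u \<or> x = w") auto
  moreover have "P' u \<noteq> u"
    using val(1) permutes_moves_image[OF Qp Qw uw[symmetric]] by simp
  ultimately show ?thesis
    using swap_untwist_permutes[OF Pp Qtp fin u w]
    by (simp add: P'_def Q'_def cycle_covers_def prod_eq_iff mem_Times_iff)
qed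

text \<open>Replacing Q by Q \<circ> (u w) cuts u off the alternating orbit through w, so in both cases
  the exchange runs along an orbit avoiding u.\<close>

definition exchange_map :: "'a \<Rightarrow> 'a \<Rightarrow> ('a \<Rightarrow> 'a) \<times> ('a \<Rightarrow> 'a) \<Rightarrow> ('a \<Rightarrow> 'a) \<times> ('a \<Rightarrow> 'a)" where
  "exchange_map u w = (\<lambda>(P, Q).
     if u \<in> alt_orbit P Q w then prod.swap (swap_untwist u w (P, Q \<circ> transpose u w))
     else swap_untwist u w (P, Q))"

lemma exchange_map_mem:
  assumes "finite W" "u \<in> W" "w \<in> W" "u \<noteq> w"
    and "(P, Q) \<in> forced_covers W E u w \<times> forced_covers W E w u"
  shows "exchange_map u w (P, Q) \<in> {\<sigma> \<in> cycle_covers W E. \<sigma> u = u} \<times> {\<sigma> \<in> cycle_covers W E. \<sigma> u \<noteq> u}"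
    and "fst (exchange_map u w (P, Q)) w = w \<longleftrightarrow> u \<notin> alt_orbit P Q w"
  using swap_untwist_linked[OF assms(1-4), of P E Q] swap_untwist_unlinked[OF assms(1-4), of P E Q] assms(5)
  by (auto simp: exchange_map_def)

lemma inj_on_exchange_map:
  assumes fin: "finite W" and u: "u \<in> W" and w: "w \<in> W" and uw: "u \<noteq> w"
  shows "inj_on (exchange_map u w) (forced_covers W E u w \<times> forced_covers W E w u)"
proof -
  let ?t = "transpose u w"
  have "(P, Q) = (P', Q')"
    if N: "(P, Q) \<in> forced_covers W E u w \<times> forced_covers W E w u"
      "(P', Q') \<in> forced_covers W E u w \<times> forced_covers W E w u"
    and eq: "exchange_map u w (P, Q) = exchange_map u w (P', Q')" for P Q P' Q'
  proof -
    have perms: "P permutes W" "Q permutes W" "P' permutes W" "Q' permutes W"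
      using N by (auto simp: forced_covers_def)
    have same_case: "u \<in> alt_orbit P Q w \<longleftrightarrow> u \<in> alt_orbit P' Q' w"
      using exchange_map_mem(2)[OF assms N(1)] exchange_map_mem(2)[OF assms N(2)] eq by simp
    note inj = inj_onD[OF inj_on_swap_untwist[OF fin w]]
    show ?thesis
    proof (cases "u \<in> alt_orbit P Q w")
      case True
      then have "swap_untwist u w (P, Q \<circ> ?t) = swap_untwist u w (P', Q' \<circ> ?t)"
        using eq same_case by (simp add: exchange_map_def) (metis swap_swap)
      then have "(P, Q \<circ> ?t) = (P', Q' \<circ> ?t)"
        by (rule inj) (use perms permutes_compose[OF permutes_swap_id[OF u w]] in auto)
      then have "P = P'" "Q \<circ> ?t \<circ> ?t = Q' \<circ> ?t \<circ> ?t" by simp_all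
      then show ?thesis by (simp add: comp_assoc)
    next
      case False
      then have "swap_untwist u w (P, Q) = swap_untwist u w (P', Q')"
        using eq same_case by (simp add: exchange_map_def)
      then show ?thesis
        by (rule inj) (use perms in auto)
    qed
  qed
  then show ?thesis by (intro inj_onI) auto
qed

lemma card_forced_covers_product_le:
  assumes "finite W" "u \<in> W" "w \<in> W" "u \<noteq> w"
  shows "card (forced_covers W E u w) * card (forced_covers W E w u)
    \<le> card {\<sigma> \<in> cycle_covers W E. \<sigma> u = u} * card {\<sigma> \<in> cycle_covers W E. \<sigma> u \<noteq> u}"
proof -
  let ?B = "{\<sigma> \<in> cycle_covers W E. \<sigma> u = u} \<times> {\<sigma> \<in> cycle_covers W E. \<sigma> u \<noteq> u}"
  have "finite ?B"
    by (intro finite_cartesian_product; rule finite_subset[OF _ finite_cycle_covers[OF assms(1)]]) auto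
  moreover have "exchange_map u w ` (forced_covers W E u w \<times> forced_covers W E w u) \<subseteq> ?B"
    using exchange_map_mem(1)[OF assms] by force
  ultimately have "card (forced_covers W E u w \<times> forced_covers W E w u) \<le> card ?B"
    using inj_on_exchange_map[OF assms] by (intro card_inj_on_le) auto
  then show ?thesis by (simp add: card_cartesian_product)
qed

lemma card_forced_covers_le_reverse:
  assumes "finite W" and sym: "\<And>x y. E x y \<Longrightarrow> E y x"
  shows "card (forced_covers W E u w) \<le> card (forced_covers W E w u)"
proof (rule card_inj_on_le[of inv])
  show "inj_on inv (forced_covers W E u w)"
    by (rule inj_on_inverseI[where g = inv]) (auto simp: forced_covers_def permutes_inv_inv)
  show "inv ` forced_covers W E u w \<subseteq> forced_covers W E w u"
  proof clarify
    fix \<tau> assume "\<tau> \<in> forced_covers W E u w"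
    then have \<tau>: "\<tau> permutes W" "\<tau> u = w" and ok: "\<And>x. x \<in> W - {u} \<Longrightarrow> \<tau> x = x \<or> E x (\<tau> x)"
      by (auto simp: forced_covers_def)
    have "inv \<tau> y = y \<or> E y (inv \<tau> y)" if "y \<in> W - {w}" for y
    proof -
      have "\<tau> (inv \<tau> y) = y" by (simp add: permutes_inverses(1)[OF \<tau>(1)])
      moreover have "inv \<tau> y \<in> W - {u}"
        using permutes_in_image[OF permutes_inv[OF \<tau>(1)]] that \<tau>(2) calculation by auto
      ultimately show ?thesis using ok[of "inv \<tau> y"] sym by auto
    qed
    then show "inv \<tau> \<in> forced_covers W E w u"
      using \<tau> by (simp add: forced_covers_def permutes_inv permutes_inv_eq)
  qed
  show "finite (forced_covers W E w u)" by (rule finite_forced_covers) fact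
qed

lemma two_card_forced_covers_le:
  assumes fin: "finite W" and sym: "\<And>x y. E x y \<Longrightarrow> E y x"
    and "u \<in> W" "w \<in> W" "u \<noteq> w"
  shows "2 * card (forced_covers W E u w) \<le> C W E"
proof -
  define n where "n = card (forced_covers W E u w)"
  define a where "a = card {\<sigma> \<in> cycle_covers W E. \<sigma> u = u}"
  define b where "b = card {\<sigma> \<in> cycle_covers W E. \<sigma> u \<noteq> u}"
  have "n = card (forced_covers W E w u)"
    using card_forced_covers_le_reverse[where E = E, OF fin sym, of u w]
      card_forced_covers_le_reverse[where E = E, OF fin sym, of w u]
    unfolding n_def by simp
  then have "n * n \<le> a * b"
    using card_forced_covers_product_le[OF assms(1,3-5), of E] unfolding a_def b_def by (metis n_def)
  also have "4 * (a * b) \<le> (a + b) * (a + b)"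
  proof -
    have "int (4 * (a * b)) \<le> int ((a + b) * (a + b))"
      using zero_le_power2[of "int a - int b"] by (simp add: algebra_simps power2_eq_square)
    then show ?thesis by (simp only: of_nat_le_iff)
  qed
  finally have "(2 * n)\<^sup>2 \<le> (a + b)\<^sup>2" by (simp add: power2_eq_square)
  then have "2 * n \<le> a + b" by (rule power2_le_imp_le) simp
  also have "a + b = C W E"
    unfolding a_def b_def C_def
    by (subst card_Un_disjoint[symmetric]) (auto intro: finite_subset[OF _ finite_cycle_covers[OF fin]] arg_cong[where f = card])
  finally show ?thesis unfolding n_def .
qed

definition neighbours :: "'a set \<Rightarrow> ('a \<Rightarrow> 'a \<Rightarrow> bool) \<Rightarrow> 'a \<Rightarrow> 'a set" where
  "neighbours V E v = {w \<in> V. w \<noteq> v \<and> E v w}"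

lemma C_pos: "finite V \<Longrightarrow> 0 < C V E"
  unfolding C_def using finite_cycle_covers[of V E]
  by (auto simp: card_gt_0_iff cycle_covers_def intro!: exI[of _ id] permutes_id)

lemma card_covers_fixing_le:
  assumes "finite V"
  shows "card {\<sigma> \<in> cycle_covers V E. \<sigma> v = v} \<le> C (V - {v}) E"
  unfolding C_def
proof (rule card_mono)
  show "finite (cycle_covers (V - {v}) E)" using assms by (simp add: finite_cycle_covers)
  show "{\<sigma> \<in> cycle_covers V E. \<sigma> v = v} \<subseteq> cycle_covers (V - {v}) E"
    by (auto simp: cycle_covers_def intro: permutes_superset)
qed

lemma card_covers_through_le:
  assumes "finite V" "v \<in> V" "a \<in> V" "a \<noteq> v"
  shows "card {\<sigma> \<in> cycle_covers V E. \<sigma> a = v \<and> \<sigma> v = b} \<le> card (forced_covers (V - {v}) E a b)"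
proof (rule card_inj_on_le[where f = "\<lambda>\<sigma>. \<sigma> \<circ> transpose v a"])
  show "inj_on (\<lambda>\<sigma>. \<sigma> \<circ> transpose v a) {\<sigma> \<in> cycle_covers V E. \<sigma> a = v \<and> \<sigma> v = b}"
    by (rule inj_on_inverseI[where g = "\<lambda>\<sigma>. \<sigma> \<circ> transpose v a"]) (simp add: comp_assoc)
  show "(\<lambda>\<sigma>. \<sigma> \<circ> transpose v a) ` {\<sigma> \<in> cycle_covers V E. \<sigma> a = v \<and> \<sigma> v = b}
    \<subseteq> forced_covers (V - {v}) E a b"
  proof (rule image_subsetI)
    fix \<sigma> assume "\<sigma> \<in> {\<sigma> \<in> cycle_covers V E. \<sigma> a = v \<and> \<sigma> v = b}"
    then have \<sigma>: "\<sigma> \<in> cycle_covers V E" "\<sigma> a = v" "\<sigma> v = b" by simp_all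
    have "\<sigma> \<circ> transpose v a permutes V"
      using \<sigma>(1) permutes_compose[OF permutes_swap_id[OF assms(2,3)]] by (simp add: cycle_covers_def)
    then have "\<sigma> \<circ> transpose v a permutes V - {v}"
      by (rule permutes_superset) (use \<sigma>(2) in auto)
    then show "\<sigma> \<circ> transpose v a \<in> forced_covers (V - {v}) E a b"
      using \<sigma> by (auto simp: forced_covers_def cycle_covers_def)
  qed
  show "finite (forced_covers (V - {v}) E a b)"
    using assms(1) by (simp add: finite_forced_covers)
qed

lemma cycle_covers_split_at:
  assumes sym: "\<And>x y. E x y \<Longrightarrow> E y x" and "v \<in> V"
  shows "cycle_covers V E \<subseteq> {\<sigma> \<in> cycle_covers V E. \<sigma> v = v}
    \<union> (\<Union>(a, b) \<in> neighbours V E v \<times> neighbours V E v. {\<sigma> \<in> cycle_covers V E. \<sigma> a = v \<and> \<sigma> v = b})"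
proof
  fix \<sigma> assume \<sigma>: "\<sigma> \<in> cycle_covers V E"
  then have \<sigma>p: "\<sigma> permutes V" and ok: "\<And>x. x \<in> V \<Longrightarrow> \<sigma> x = x \<or> E x (\<sigma> x)"
    by (auto simp: cycle_covers_def)
  show "\<sigma> \<in> {\<sigma> \<in> cycle_covers V E. \<sigma> v = v}
    \<union> (\<Union>(a, b) \<in> neighbours V E v \<times> neighbours V E v. {\<sigma> \<in> cycle_covers V E. \<sigma> a = v \<and> \<sigma> v = b})"
  proof (cases "\<sigma> v = v")
    case False
    define a where "a = inv \<sigma> v"
    have "\<sigma> a = v" "a \<in> V"
      using \<open>v \<in> V\<close> permutes_inverses(1)[OF \<sigma>p] permutes_in_image[OF permutes_inv[OF \<sigma>p]]
      by (auto simp: a_def)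
    moreover have "a \<noteq> v" using False \<open>\<sigma> a = v\<close> by auto
    ultimately have "a \<in> neighbours V E v" "\<sigma> v \<in> neighbours V E v"
      using ok[of a] ok[of v] sym False \<open>v \<in> V\<close> permutes_in_image[OF \<sigma>p]
      by (auto simp: neighbours_def)
    then show ?thesis using \<sigma> \<open>\<sigma> a = v\<close> by blast
  qed (use \<sigma> in blast)
qed

lemma sum_diagonal_weights:
  assumes "finite X"
  shows "(\<Sum>p \<in> X \<times> X. if fst p = snd p then 2 * c else c) = (card X * card X + card X) * (c :: nat)"
proof -
  have "(\<Sum>p \<in> X \<times> X. if fst p = snd p then 2 * c else c) = (\<Sum>a \<in> X. \<Sum>b \<in> X. c + (if a = b then c else 0))"
    unfolding sum.cartesian_product by (intro sum.cong) auto
  also have "\<dots> = (\<Sum>a \<in> X. card X * c + c)"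
    using assms by (simp add: sum.distrib)
  finally show ?thesis by (simp add: algebra_simps)
qed

lemma two_C_le_C_delete:
  assumes fin: "finite V" and sym: "\<And>x y. E x y \<Longrightarrow> E y x" and v: "v \<in> V"
  defines "k \<equiv> card (neighbours V E v)"
  shows "2 * C V E \<le> (k * k + k + 2) * C (V - {v}) E"
proof -
  let ?X = "neighbours V E v" and ?c = "C (V - {v}) E"
  let ?fixing = "{\<sigma> \<in> cycle_covers V E. \<sigma> v = v}"
  define through where "through p = {\<sigma> \<in> cycle_covers V E. \<sigma> (fst p) = v \<and> \<sigma> v = snd p}" for p
  have finX: "finite ?X" using fin by (simp add: neighbours_def)
  have "C V E \<le> card (?fixing \<union> (\<Union>p \<in> ?X \<times> ?X. through p))"
    unfolding C_def
    by (rule card_mono[OF finite_subset[OF _ finite_cycle_covers[OF fin]]])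
      (use cycle_covers_split_at[where E = E, OF sym v] in \<open>auto simp: through_def split_beta\<close>)
  also have "\<dots> \<le> card ?fixing + card (\<Union>p \<in> ?X \<times> ?X. through p)"
    by (rule card_Un_le)
  also have "\<dots> \<le> card ?fixing + (\<Sum>p \<in> ?X \<times> ?X. card (through p))"
    using card_UN_le[OF finite_cartesian_product[OF finX finX]] by (rule add_left_mono)
  finally have "2 * C V E \<le> 2 * card ?fixing + (\<Sum>p \<in> ?X \<times> ?X. 2 * card (through p))"
    unfolding sum_distrib_left[symmetric] by linarith
  also have "\<dots> \<le> 2 * ?c + (\<Sum>p \<in> ?X \<times> ?X. if fst p = snd p then 2 * ?c else ?c)"
  proof (intro add_mono sum_mono)
    show "2 * card ?fixing \<le> 2 * ?c" using card_covers_fixing_le[OF fin] by simp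
    fix p assume "p \<in> ?X \<times> ?X"
    then obtain a b where p: "p = (a, b)" and a: "a \<in> V - {v}" and b: "b \<in> V - {v}"
      by (auto simp: neighbours_def)
    have "card (through p) \<le> card (forced_covers (V - {v}) E a b)"
      unfolding through_def p using card_covers_through_le[OF fin v] a by simp
    moreover have "card (forced_covers (V - {v}) E a a) \<le> ?c"
      unfolding C_def using fin
      by (intro card_mono finite_cycle_covers) (auto simp: forced_covers_def cycle_covers_def)
    moreover have "a \<noteq> b \<Longrightarrow> 2 * card (forced_covers (V - {v}) E a b) \<le> ?c"
      using two_card_forced_covers_le[OF _ sym a b] fin by simp
    ultimately show "2 * card (through p) \<le> (if fst p = snd p then 2 * ?c else ?c)"
      by (auto simp: p)
  qed
  also have "\<dots> = (k * k + k + 2) * ?c"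
    using sum_diagonal_weights[OF finX] by (simp add: k_def algebra_simps)
  finally show ?thesis .
qed

theorem theorem2p1:
  fixes V :: "'a set" and E :: "'a \<Rightarrow> 'a \<Rightarrow> bool" and v :: 'a
  assumes "finite V"
    and "\<And>x y. E x y \<Longrightarrow> E y x"
    and "v \<in> V"
  shows "R V E v \<le> 1 + (real (deg V E v) ^ 2 - real (deg V E v)) / 2"
proof -
  define k where "k = card (neighbours V E v)"
  define c where "c = C (V - {v}) E"
  have "0 < c" unfolding c_def using assms(1) by (simp add: C_pos)
  have "real (2 * C V E) \<le> real ((k * k + k + 2) * c)"
    unfolding k_def c_def using two_C_le_C_delete[OF assms] by (simp only: of_nat_le_iff)
  then have "real (C V E) / real c \<le> (real k * real k + real k + 2) / 2"
    using \<open>0 < c\<close> by (simp add: field_simps)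
  moreover have "deg V E v = k + 1"
    by (simp add: deg_def k_def neighbours_def)
  ultimately show ?thesis
    by (simp add: R_def c_def power2_eq_square field_simps)
qed

end
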